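(* Let $n\ge1$, $\alpha,\gamma,\beta_1,\dots,\beta_n\in\widehat{\mathbb{F}_q^\times}$, and $i\in\{0,1,\dots,n-1\}$. (i) If $\beta_{i+1}\cdots\beta_n\neq\varepsilon$, then for $\lambda_1,\dots,\lambda_i,x\in\mathbb{F}_q$, $$F_D^{(n)}\!\left({\alpha;\beta_1,\dots,\beta_n\atop\gamma};\lambda_1,\dots,\lambda_i,x,\dots,x\right)=F_D^{(i+1)}\!\left({\alpha;\beta_1,\dots,\beta_i,\beta_{i+1}\cdots\beta_n\atop\gamma};\lambda_1,\dots,\lambda_i,x\right).$$ In particular, if $\beta_1\cdots\beta_n\neq\varepsilon$, then $F_D^{(n)}\!\left({\alpha;\beta_1,\dots,\beta_n\atop\gamma};x,\dots,x\right)={}_2F_1\!\left({\alpha,\beta_1\cdots\beta_n\atop\gamma};x\right)$. (ii) If $\beta_{i+1}\cdots\beta_n\notin\{\varepsilon,\overline{\alpha}\gamma\}$, then for $\lambda_1,\dots,\lambda_i\in\mathbb{F}_q$, $$F_D^{(n)}\!\left({\alpha;\beta_1,\dots,\beta_n\atop\gamma};\lambda_1,\dots,\lambda_i,1,\dots,1\right)=\frac{g^\circ(\gamma)\,g(\overline{\alpha\beta_{i+1}\cdots\beta_n}\gamma)}{g^\circ(\overline{\alpha}\gamma)\,g^\circ(\overline{\beta_{i+1}\cdots\beta_n}\gamma)}F_D^{(i)}\!\left({\alpha;\beta_1,\dots,\beta_i\atop\overline{\beta_{i+1}\cdots\beta_n}\gamma};\lambda_1,\dots,\lambda_i\right).$$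 In particular, if $\beta_1\cdots\beta_n\notin\{\varepsilon,\overline{\alpha}\gamma\}$, then $F_D^{(n)}\!\left({\alpha;\beta_1,\dots,\beta_n\atop\gamma};1,\dots,1\right)=\frac{g^\circ(\gamma)g(\overline{\alpha\beta_1\cdots\beta_n}\gamma)}{g^\circ(\overline{\alpha}\gamma)g^\circ(\overline{\beta_1\cdots\beta_n}\gamma)}$.
   Context: $\mathbb{F}_q$ is a finite field with $q$ elements. $\widehat{\mathbb{F}_q^\times}$ is the group of multiplicative characters $\mathbb{F}_q^\times\to\overline{\mathbb{Q}}^\times$, $\varepsilon$ the trivial character; every character (including $\varepsilon$) is extended by $0$ at $0$; $\overline{\eta}=\eta^{-1}$, and $\overline{\eta_1\cdots\eta_k}=(\eta_1\cdots\eta_k)^{-1}$; $\delta(\eta)=1$ if $\eta=\varepsilon$, else $0$. $\psi$ is a fixed non-trivial additive character. $g(\eta)=-\sum_{x\in\mathbb{F}_q^\times}\psi(x)\eta(x)$, $g^\circ(\eta)=q^{\delta(\eta)}g(\eta)$, $(\alpha)_\nu=g(\alpha\nu)/g(\alpha)$, $(\alpha)^\circ_\nu=g^\circ(\alpha\nu)/g^\circ(\alpha)$. For $\lambda\in\mathbb{F}_q$, ${}_2F_1\!\left({\alpha,\beta\atop\gamma};\lambda\right)=\frac{1}{1-q}\sum_{\nu}\frac{(\alpha)_\nu(\beta)_\nu}{(\varepsilon)^\circ_\nu(\gamma)^\circ_\nu}\nu(\lambda)$. Lauricella's $F_D$: for $m\ge1$ and $\lambda_j\in\mathbb{F}_q$,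 $F_D^{(m)}\!\left({\alpha;\beta_1,\dots,\beta_m\atop\gamma};\lambda_1,\dots,\lambda_m\right)=\frac{1}{(1-q)^m}\sum_{\nu_1,\dots,\nu_m\in\widehat{\mathbb{F}_q^\times}}\frac{(\alpha)_{\nu_1\cdots\nu_m}\prod_j(\beta_j)_{\nu_j}}{(\gamma)^\circ_{\nu_1\cdots\nu_m}\prod_j(\varepsilon)^\circ_{\nu_j}}\prod_j\nu_j(\lambda_j)$, and by convention $F_D^{(0)}=1$. *)

theory Defs
  imports Complex_Main "HOL-Library.FuncSet"
begin

text \<open>Finite field = type of class field + finite; q = card (UNIV :: 'a set).
 Character values are taken in complex numbers (an algebraic closure of Q embeds in C).
 Multiplicative characters are functions on the whole field, extended by 0 at 0.\<close>

definition mchars :: "('a::field \<Rightarrow> complex) set" where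
  "mchars = {\<chi>. \<chi> 0 = 0 \<and> \<chi> 1 = 1 \<and> (\<forall>x y. \<chi> (x * y) = \<chi> x * \<chi> y)}"

definition eps :: "'a::field \<Rightarrow> complex" where
  "eps = (\<lambda>x. if x = 0 then 0 else 1)"

definition cmul :: "('a \<Rightarrow> complex) \<Rightarrow> ('a \<Rightarrow> complex) \<Rightarrow> 'a \<Rightarrow> complex" where
  "cmul \<chi> \<eta> = (\<lambda>x. \<chi> x * \<eta> x)"

definition cinv :: "('a \<Rightarrow> complex) \<Rightarrow> 'a \<Rightarrow> complex" where
  "cinv \<eta> = (\<lambda>x. inverse (\<eta> x))"

definition chprod :: "(nat \<Rightarrow> 'a::field \<Rightarrow> complex) \<Rightarrow> nat set \<Rightarrow> 'a \<Rightarrow> complex" where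
  "chprod \<nu> I = (\<lambda>x. if x = 0 then 0 else (\<Prod>j\<in>I. \<nu> j x))"

definition delta :: "('a::field \<Rightarrow> complex) \<Rightarrow> nat" where
  "delta \<eta> = (if \<eta> = eps then 1 else 0)"

definition add_char :: "('a::field \<Rightarrow> complex) \<Rightarrow> bool" where
  "add_char \<psi> \<longleftrightarrow> \<psi> 0 = 1 \<and> (\<forall>x y. \<psi> (x + y) = \<psi> x * \<psi> y)"

definition gauss :: "('a::{field,finite} \<Rightarrow> complex) \<Rightarrow> ('a \<Rightarrow> complex) \<Rightarrow> complex" where
  "gauss \<psi> \<eta> = - (\<Sum>x\<in>UNIV - {0}. \<psi> x * \<eta> x)"

definition gauss0 :: "('a::{field,finite} \<Rightarrow> complex) \<Rightarrow> ('a \<Rightarrow> complex) \<Rightarrow> complex" where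
  "gauss0 \<psi> \<eta> = of_nat (card (UNIV :: 'a set)) ^ delta \<eta> * gauss \<psi> \<eta>"

definition poch :: "('a::{field,finite} \<Rightarrow> complex) \<Rightarrow> ('a \<Rightarrow> complex) \<Rightarrow> ('a \<Rightarrow> complex) \<Rightarrow> complex" where
  "poch \<psi> \<alpha> \<nu> = gauss \<psi> (cmul \<alpha> \<nu>) / gauss \<psi> \<alpha>"

definition poch0 :: "('a::{field,finite} \<Rightarrow> complex) \<Rightarrow> ('a \<Rightarrow> complex) \<Rightarrow> ('a \<Rightarrow> complex) \<Rightarrow> complex" where
  "poch0 \<psi> \<alpha> \<nu> = gauss0 \<psi> (cmul \<alpha> \<nu>) / gauss0 \<psi> \<alpha>"

definition F21 :: "('a::{field,finite} \<Rightarrow> complex) \<Rightarrow> ('a \<Rightarrow> complex) \<Rightarrow> ('a \<Rightarrow> complex)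
    \<Rightarrow> ('a \<Rightarrow> complex) \<Rightarrow> 'a \<Rightarrow> complex" where
  "F21 \<psi> \<alpha> \<beta> \<gamma> lam = (1 / (1 - of_nat (card (UNIV :: 'a set)))) *
     (\<Sum>\<nu>\<in>mchars. poch \<psi> \<alpha> \<nu> * poch \<psi> \<beta> \<nu> / (poch0 \<psi> eps \<nu> * poch0 \<psi> \<gamma> \<nu>) * \<nu> lam)"

text \<open>Lauricella F_D^(m): parameters beta 0..beta (m-1), arguments lam 0..lam (m-1).\<close>
definition FD :: "('a::{field,finite} \<Rightarrow> complex) \<Rightarrow> nat \<Rightarrow> ('a \<Rightarrow> complex)
    \<Rightarrow> (nat \<Rightarrow> 'a \<Rightarrow> complex) \<Rightarrow> ('a \<Rightarrow> complex) \<Rightarrow> (nat \<Rightarrow> 'a) \<Rightarrow> complex" where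
  "FD \<psi> m \<alpha> \<beta> \<gamma> lam = (if m = 0 then 1 else
     (1 / (1 - of_nat (card (UNIV :: 'a set))) ^ m) *
     (\<Sum>\<nu>\<in>{..<m} \<rightarrow>\<^sub>E mchars.
        poch \<psi> \<alpha> (chprod \<nu> {..<m}) * (\<Prod>j<m. poch \<psi> (\<beta> j) (\<nu> j))
        / (poch0 \<psi> \<gamma> (chprod \<nu> {..<m}) * (\<Prod>j<m. poch0 \<psi> eps (\<nu> j)))
        * (\<Prod>j<m. \<nu> j (lam j))))"

end

theory Submission
  imports Defs "HOL-Library.Cardinality" "HOL-Algebra.Algebraic_Closure_Type"
begin

text \<open>
  Expanding its coefficients by orthogonality of characters turns the series defining \<open>F\<^sub>D\<close>
  into an Euler-type sum \<open>F\<^sub>D(\<lambda>) = (q - 1)\<inverse> \<Sum>\<^sub>u K(\<alpha>, \<gamma>; u) \<Prod>\<^sub>j \<^sub>1F\<^sub>0(\<beta>\<^sub>j; \<lambda>\<^sub>j / u)\<close>,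
  whose kernel \<open>K(\<alpha>, \<gamma>; u) = \<Sum>\<^sub>\<mu> (\<alpha>)\<^sub>\<mu> / (\<gamma>)\<degree>\<^sub>\<mu> \<mu>(u)\<close> and whose factors
  \<open>\<^sub>1F\<^sub>0(\<beta>; v) = \<beta>\<inverse>(1 - v)\<close> (for \<open>v \<noteq> 0, 1\<close>) are evaluated with Gauss sums.
  Since \<open>\<^sub>1F\<^sub>0(\<beta>; v) \<^sub>1F\<^sub>0(\<beta>'; v) = \<^sub>1F\<^sub>0(\<beta>\<beta>'; v)\<close> as long as \<open>\<beta>\<beta>' \<noteq> \<epsilon>\<close>, equal
  arguments can be merged, which is (i). At argument \<open>1\<close> the factor
  \<open>\<^sub>1F\<^sub>0(B; 1/u) = B(-u) / B(1 - u)\<close> only twists the characters of the kernel,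
  \<open>K(\<alpha>, \<gamma>; u) \<^sub>1F\<^sub>0(B; 1/u) = c K(\<alpha>, B\<inverse>\<gamma>; u)\<close>, and the reflection formula
  \<open>g\<degree>(\<chi>) g(\<chi>\<inverse>) = \<chi>(-1) q\<close> evaluates \<open>c\<close>; this gives (ii).
\<close>

lemma mchar_zero: "\<chi> \<in> mchars \<Longrightarrow> \<chi> 0 = 0"
  and mchar_one: "\<chi> \<in> mchars \<Longrightarrow> \<chi> 1 = 1"
  and mchar_mult: "\<chi> \<in> mchars \<Longrightarrow> \<chi> (x * y) = \<chi> x * \<chi> y"
  by (simp_all add: mchars_def)

lemma mchar_inverse:
  assumes "\<chi> \<in> mchars"
  shows "\<chi> (inverse (x::'a::field)) = inverse (\<chi> x)"
proof (cases "x = 0")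
  case False
  hence "\<chi> x * \<chi> (inverse x) = 1"
    by (metis assms mchar_mult mchar_one right_inverse)
  thus ?thesis by (metis inverse_unique)
qed (simp add: assms mchar_zero)

lemma mchar_nonzero: "\<chi> \<in> mchars \<Longrightarrow> (x::'a::field) \<noteq> 0 \<Longrightarrow> \<chi> x \<noteq> 0"
  by (metis mchar_mult mchar_one right_inverse zero_neq_one mult_zero_left)

lemma mchar_divide: "\<chi> \<in> mchars \<Longrightarrow> \<chi> ((x::'a::field) / y) = \<chi> x / \<chi> y"
  by (simp add: divide_inverse mchar_mult mchar_inverse)

lemma mchar_power: "\<chi> \<in> mchars \<Longrightarrow> \<chi> ((x::'a::field) ^ n) = \<chi> x ^ n"
  by (induction n) (simp_all add: mchar_one mchar_mult)

lemma mchar_minus_one_square: "\<chi> \<in> mchars \<Longrightarrow> \<chi> (- 1 :: 'a::field) * \<chi> (- 1) = 1"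
  by (metis mchar_mult mchar_one mult_minus1_right minus_minus)

lemma mchar_minus_one_inverse: "\<chi> \<in> mchars \<Longrightarrow> inverse (\<chi> (- 1 :: 'a::field)) = \<chi> (- 1)"
  by (rule inverse_unique) (rule mchar_minus_one_square)

lemma mchar_minus: "\<chi> \<in> mchars \<Longrightarrow> \<chi> (- x :: 'a::field) = \<chi> (- 1) * \<chi> x"
  by (metis mchar_mult mult_minus1)

lemma eps_mchar: "eps \<in> mchars"
  and cmul_mchar: "\<chi> \<in> mchars \<Longrightarrow> \<eta> \<in> mchars \<Longrightarrow> cmul \<chi> \<eta> \<in> mchars"
  and cinv_mchar: "\<chi> \<in> mchars \<Longrightarrow> cinv \<chi> \<in> mchars"
  by (simp_all add: mchars_def eps_def cmul_def cinv_def mult.commute)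

lemma chprod_mchar:
  "finite I \<Longrightarrow> (\<And>j. j \<in> I \<Longrightarrow> \<nu> j \<in> mchars) \<Longrightarrow> chprod \<nu> I \<in> mchars"
  by (auto simp: mchars_def chprod_def prod.distrib)

lemma cmul_commute: "cmul \<chi> \<eta> = cmul \<eta> \<chi>"
  and cmul_assoc: "cmul (cmul \<chi> \<eta>) \<rho> = cmul \<chi> (cmul \<eta> \<rho>)"
  and cinv_cinv: "cinv (cinv \<chi>) = \<chi>"
  by (simp_all add: cmul_def cinv_def fun_eq_iff mult_ac)

lemma cinv_eps: "cinv eps = eps"
  by (simp add: cinv_def eps_def fun_eq_iff)

lemma cmul_eps: "\<chi> \<in> mchars \<Longrightarrow> cmul \<chi> eps = \<chi>"
  by (auto simp: cmul_def eps_def fun_eq_iff mchar_zero)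

lemma cmul_cinv: "\<chi> \<in> mchars \<Longrightarrow> cmul \<chi> (cinv \<chi>) = eps"
  by (auto simp: cmul_def cinv_def eps_def fun_eq_iff mchar_zero mchar_nonzero)

lemma mchar_eq_eps_iff:
  "\<chi> \<in> mchars \<Longrightarrow> \<chi> = eps \<longleftrightarrow> (\<forall>x. x \<noteq> 0 \<longrightarrow> \<chi> x = 1)"
  by (auto simp: eps_def fun_eq_iff mchar_zero)

lemma cmul_cinv_eq_eps_iff:
  assumes "\<chi> \<in> mchars" "\<eta> \<in> mchars"
  shows "cmul \<chi> (cinv \<eta>) = eps \<longleftrightarrow> \<chi> = \<eta>"
proof
  assume "cmul \<chi> (cinv \<eta>) = eps"
  hence "\<chi> x = \<eta> x" for x
    using assms by (cases "x = 0")
      (auto simp: mchar_zero mchar_nonzero cmul_def cinv_def eps_def fun_eq_iff field_simps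
        dest: spec[where x = x])
  thus "\<chi> = \<eta>" by blast
qed (simp add: assms cmul_cinv)

lemma eq_cmul_cinv_iff:
  assumes "\<alpha> \<in> mchars" "\<beta> \<in> mchars" "\<gamma> \<in> mchars"
  shows "\<alpha> = cmul (cinv \<beta>) \<gamma> \<longleftrightarrow> \<beta> = cmul (cinv \<alpha>) \<gamma>"
proof -
  have "cmul \<alpha> (cinv (cmul (cinv \<beta>) \<gamma>)) = cmul \<beta> (cinv (cmul (cinv \<alpha>) \<gamma>))"
    by (simp add: cmul_def cinv_def fun_eq_iff mult_ac)
  thus ?thesis
    using cmul_cinv_eq_eps_iff[of \<alpha> "cmul (cinv \<beta>) \<gamma>"] cmul_cinv_eq_eps_iff[of \<beta> "cmul (cinv \<alpha>) \<gamma>"]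
    by (simp add: assms cmul_mchar cinv_mchar)
qed

lemma chprod_eps: "(\<And>j. j \<in> I \<Longrightarrow> \<nu> j = eps) \<Longrightarrow> chprod \<nu> I = eps"
  by (auto simp: chprod_def eps_def fun_eq_iff)

lemma chprod_singleton: "\<nu> j \<in> mchars \<Longrightarrow> chprod \<nu> {j} = \<nu> j"
  by (auto simp: chprod_def fun_eq_iff mchar_zero)

section \<open>Characters of a finite field\<close>

lemma card_UNIV_field_ge_2: "CARD('a::{field,finite}) \<ge> 2"
proof -
  have "card {0::'a, 1} \<le> CARD('a)" by (rule card_mono) auto
  thus ?thesis by simp
qed

lemma power_card_minus_one:
  fixes x :: "'a::{field,finite}"
  assumes "x \<noteq> 0"
  shows "x ^ (CARD('a) - 1) = 1"
proof -
  define S where "S = (UNIV - {0::'a})"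
  have "(\<Prod>y\<in>S. x * y) = (\<Prod>y\<in>S. y)"
    by (rule prod.reindex_bij_witness[of _ "\<lambda>y. y / x" "\<lambda>y. x * y"]) (use assms in \<open>auto simp: S_def\<close>)
  moreover have "(\<Prod>y\<in>S. x * y) = x ^ card S * (\<Prod>y\<in>S. y)"
    by (simp add: prod.distrib)
  moreover have "(\<Prod>y\<in>S. y) \<noteq> 0" by (simp add: S_def)
  ultimately show ?thesis by (simp add: S_def card_Diff_singleton)
qed

lemma finite_field_mult_cyclic:
  "\<exists>a::'a::{field,finite}. a \<noteq> 0 \<and> (\<forall>x. x \<noteq> 0 \<longrightarrow> (\<exists>k::nat. x = a ^ k))"
proof -
  define R where "R = (ring_of_type_algebra :: 'a ring)"
  interpret field R unfolding R_def ..
  have pow: "a [^]\<^bsub>R\<^esub> (k::nat) = a ^ k" for a k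
    by (induction k) (simp_all add: R_def ring_of_type_algebra_def nat_pow_def)
  obtain a where a: "a \<in> carrier (mult_of R)"
    and gen: "carrier (mult_of R) = {a [^]\<^bsub>R\<^esub> k | k::nat. k \<in> UNIV}"
    using finite_field_mult_group_has_gen by (auto simp: R_def ring_of_type_algebra_def)
  show ?thesis
  proof (intro exI[of _ a] conjI allI impI)
    show "a \<noteq> 0" using a by (simp add: R_def ring_of_type_algebra_def)
    fix x :: 'a assume "x \<noteq> 0"
    hence "x \<in> carrier (mult_of R)" by (simp add: R_def ring_of_type_algebra_def)
    then obtain k :: nat where "x = a [^]\<^bsub>R\<^esub> k" using gen by blast
    thus "\<exists>k. x = a ^ k" unfolding pow by blast
  qed
qed

lemma power_eq_power_if_mod_eq:
  fixes x :: "'a::monoid_mult"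
  assumes "x ^ n = 1" and "k mod n = l mod n"
  shows "x ^ k = x ^ l"
proof -
  have reduce: "x ^ m = x ^ (m mod n)" for m
  proof -
    have "x ^ m = x ^ (n * (m div n) + m mod n)" by simp
    also have "\<dots> = x ^ (m mod n)" by (simp only: power_add power_mult assms(1) power_one mult_1)
    finally show ?thesis .
  qed
  show ?thesis by (subst (1 2) reduce) (simp add: assms(2))
qed

lemma finite_field_generator:
  "\<exists>a::'a::{field,finite}. a \<noteq> 0 \<and> bij_betw (\<lambda>k. a ^ k) {..<CARD('a) - 1} (UNIV - {0})"
proof -
  define N where "N = CARD('a) - 1"
  obtain a :: 'a where "a \<noteq> 0" and a: "\<And>x. x \<noteq> 0 \<Longrightarrow> \<exists>k. x = a ^ k"
    using finite_field_mult_cyclic by blast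
  have img: "(\<lambda>k. a ^ k) ` {..<N} = UNIV - {0}"
  proof
    show "UNIV - {0} \<subseteq> (\<lambda>k. a ^ k) ` {..<N}"
    proof
      fix x :: 'a assume "x \<in> UNIV - {0}"
      then obtain k where "x = a ^ k" using a by blast
      also have "\<dots> = a ^ (k mod N)"
        unfolding N_def by (rule power_eq_power_if_mod_eq[OF power_card_minus_one[OF \<open>a \<noteq> 0\<close>]]) simp
      finally show "x \<in> (\<lambda>k. a ^ k) ` {..<N}"
        using card_UNIV_field_ge_2[where 'a='a] by (auto simp: N_def)
    qed
  qed (use \<open>a \<noteq> 0\<close> in auto)
  moreover have "inj_on (\<lambda>k. a ^ k) {..<N}"
  proof (rule eq_card_imp_inj_on)
    show "card ((\<lambda>k. a ^ k) ` {..<N}) = card {..<N}"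
      by (simp only: img) (simp add: card_Diff_singleton N_def)
  qed simp
  ultimately show ?thesis using \<open>a \<noteq> 0\<close> by (auto simp: bij_betw_def N_def)
qed

definition field_gen :: "'a::{field,finite}" where
  "field_gen = (SOME a. a \<noteq> 0 \<and> bij_betw (\<lambda>k. a ^ k) {..<CARD('a) - 1} (UNIV - {0}))"

definition dlog :: "'a::{field,finite} \<Rightarrow> nat" where
  "dlog = inv_into {..<CARD('a) - 1} (\<lambda>k. field_gen ^ k)"

lemma field_gen_nonzero: "(field_gen :: 'a::{field,finite}) \<noteq> 0"
  and bij_betw_field_gen_power:
    "bij_betw (\<lambda>k. (field_gen :: 'a::{field,finite}) ^ k) {..<CARD('a) - 1} (UNIV - {0})"
  using someI_ex[OF finite_field_generator[where 'a='a]] by (simp_all add: field_gen_def)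

lemma field_gen_power_dlog: "(x::'a::{field,finite}) \<noteq> 0 \<Longrightarrow> field_gen ^ dlog x = x"
  using bij_betw_field_gen_power[where 'a='a] unfolding dlog_def
  by (simp add: bij_betw_inv_into_right)

lemma dlog_less: "(x::'a::{field,finite}) \<noteq> 0 \<Longrightarrow> dlog x < CARD('a) - 1"
  using bij_betw_field_gen_power[where 'a='a] unfolding dlog_def
  by (metis DiffI UNIV_I bij_betw_def inv_into_into lessThan_iff singletonD)

lemma field_gen_power_eq_iff:
  "(field_gen :: 'a::{field,finite}) ^ k = field_gen ^ l \<longleftrightarrow>
     k mod (CARD('a) - 1) = l mod (CARD('a) - 1)"
proof -
  define N where "N = CARD('a) - 1"
  have "N > 0" using card_UNIV_field_ge_2[where 'a='a] by (simp add: N_def)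
  have mod: "(field_gen :: 'a) ^ (k mod N) = field_gen ^ k" for k
    unfolding N_def by (rule power_eq_power_if_mod_eq[OF power_card_minus_one[OF field_gen_nonzero]]) simp
  have "inj_on (\<lambda>k. (field_gen :: 'a) ^ k) {..<N}"
    using bij_betw_field_gen_power unfolding N_def bij_betw_def by blast
  with \<open>N > 0\<close> show ?thesis
    by (subst (1 2) mod[symmetric]) (auto simp: N_def dest: inj_onD)
qed

definition char_of_root :: "complex \<Rightarrow> 'a::{field,finite} \<Rightarrow> complex" where
  "char_of_root z x = (if x = 0 then 0 else z ^ dlog x)"

lemma char_of_root_mchar:
  assumes "z ^ (CARD('a::{field,finite}) - 1) = 1"
  shows "(char_of_root z :: 'a \<Rightarrow> complex) \<in> mchars"
  unfolding mchars_def
proof (intro CollectI conjI allI)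
  have "(field_gen :: 'a) ^ dlog (1::'a) = field_gen ^ 0"
    by (simp add: field_gen_power_dlog)
  hence "dlog (1::'a) mod (CARD('a) - 1) = 0 mod (CARD('a) - 1)"
    by (simp only: field_gen_power_eq_iff)
  thus "char_of_root z (1::'a) = 1"
    using dlog_less[of "1::'a"] by (simp add: char_of_root_def)
  fix x y :: 'a
  show "char_of_root z (x * y) = char_of_root z x * char_of_root z y"
  proof (cases "x = 0 \<or> y = 0")
    case False
    hence "dlog (x * y) mod (CARD('a) - 1) = (dlog x + dlog y) mod (CARD('a) - 1)"
      unfolding field_gen_power_eq_iff[symmetric] by (simp add: power_add field_gen_power_dlog)
    hence "z ^ dlog (x * y) = z ^ (dlog x + dlog y)"
      by (rule power_eq_power_if_mod_eq[OF assms])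
    thus ?thesis using False by (simp add: char_of_root_def power_add)
  qed (auto simp: char_of_root_def)
qed (simp add: char_of_root_def)

lemma char_of_root_field_gen:
  assumes "z ^ (CARD('a::{field,finite}) - 1) = 1"
  shows "char_of_root z (field_gen :: 'a) = z"
proof -
  have "(field_gen :: 'a) ^ dlog (field_gen :: 'a) = field_gen ^ 1"
    by (simp add: field_gen_power_dlog field_gen_nonzero)
  hence "dlog (field_gen :: 'a) mod (CARD('a) - 1) = 1 mod (CARD('a) - 1)"
    by (simp only: field_gen_power_eq_iff)
  hence "z ^ dlog (field_gen :: 'a) = z ^ 1"
    by (rule power_eq_power_if_mod_eq[OF assms])
  thus ?thesis using field_gen_nonzero[where 'a='a] by (simp add: char_of_root_def)
qed

lemma bij_betw_mchars_roots_unity: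
  "bij_betw (\<lambda>\<chi>. \<chi> field_gen) (mchars :: ('a::{field,finite} \<Rightarrow> complex) set)
     {z. z ^ (CARD('a) - 1) = 1}"
proof (rule bij_betw_byWitness[where f' = char_of_root])
  show "\<forall>\<chi>\<in>mchars. char_of_root (\<chi> field_gen) = (\<chi> :: 'a \<Rightarrow> complex)"
    by (auto simp: fun_eq_iff char_of_root_def mchar_zero mchar_power[symmetric] field_gen_power_dlog)
  show "(\<lambda>\<chi>. \<chi> (field_gen :: 'a)) ` mchars \<subseteq> {z. z ^ (CARD('a) - 1) = 1}"
  proof (rule image_subsetI)
    fix \<chi> :: "'a \<Rightarrow> complex" assume "\<chi> \<in> mchars"
    hence "\<chi> field_gen ^ (CARD('a) - 1) = \<chi> (field_gen ^ (CARD('a) - 1))" by (simp add: mchar_power)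
    thus "\<chi> field_gen \<in> {z. z ^ (CARD('a) - 1) = 1}"
      using \<open>\<chi> \<in> mchars\<close> power_card_minus_one[OF field_gen_nonzero, where 'a='a]
      by (simp add: mchar_one)
  qed
qed (auto simp: char_of_root_field_gen char_of_root_mchar)

lemma finite_mchars: "finite (mchars :: ('a::{field,finite} \<Rightarrow> complex) set)"
  using bij_betw_finite[OF bij_betw_mchars_roots_unity[where 'a='a]] card_UNIV_field_ge_2[where 'a='a]
  by (simp add: finite_roots_unity)

lemma card_mchars: "card (mchars :: ('a::{field,finite} \<Rightarrow> complex) set) = CARD('a) - 1"
  using bij_betw_same_card[OF bij_betw_mchars_roots_unity[where 'a='a]] card_UNIV_field_ge_2[where 'a='a]
  by (simp add: card_roots_unity_eq)

lemma mchars_separate_points: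
  assumes "(x::'a::{field,finite}) \<noteq> 0" "x \<noteq> 1"
  obtains \<chi> where "\<chi> \<in> mchars" "\<chi> x \<noteq> 1"
proof -
  define N where "N = CARD('a) - 1"
  define \<omega> where "\<omega> k = cis (2 * pi * real k / real N)" for k
  have "dlog x \<noteq> 0" using field_gen_power_dlog[OF assms(1)] assms(2) by (metis power_0)
  moreover have "dlog x < N" using dlog_less[OF assms(1)] by (simp add: N_def)
  ultimately have "1 < N" by simp
  hence bij: "bij_betw \<omega> {..<N} {z. z ^ N = 1}"
    unfolding \<omega>_def by (intro bij_betw_roots_unity) simp
  have root: "\<omega> 1 ^ N = 1"
    using bij_betw_apply[OF bij, of 1] \<open>1 < N\<close> by simp
  have "\<omega> 1 ^ dlog x = \<omega> (dlog x)" by (simp add: \<omega>_def DeMoivre mult_ac)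
  also have "\<dots> \<noteq> \<omega> 0"
  proof
    assume "\<omega> (dlog x) = \<omega> 0"
    hence "dlog x = 0"
      using bij_betw_imp_inj_on[OF bij] \<open>dlog x < N\<close> \<open>1 < N\<close> by (simp add: inj_on_eq_iff)
    thus False using \<open>dlog x \<noteq> 0\<close> by contradiction
  qed
  finally have "char_of_root (\<omega> 1) x \<noteq> 1" using assms(1) by (simp add: char_of_root_def \<omega>_def)
  moreover have "char_of_root (\<omega> 1) \<in> (mchars :: ('a \<Rightarrow> complex) set)"
    using char_of_root_mchar root by (simp add: N_def)
  ultimately show ?thesis using that by blast
qed

lemma sum_mchar:
  assumes "(\<chi> :: 'a::{field,finite} \<Rightarrow> complex) \<in> mchars"
  shows "(\<Sum>x\<in>UNIV. \<chi> x) = (if \<chi> = eps then of_nat CARD('a) - 1 else 0)"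
proof (cases "\<chi> = eps")
  case True
  have "(\<Sum>x\<in>UNIV. (eps :: 'a \<Rightarrow> complex) x) = (\<Sum>x\<in>UNIV - {0::'a}. 1)"
    by (subst sum.remove[of _ 0]) (auto simp: eps_def intro: sum.cong)
  thus ?thesis using True card_UNIV_field_ge_2[where 'a='a] by (simp add: card_Diff_singleton of_nat_diff)
next
  case False
  then obtain y where y: "y \<noteq> 0" "\<chi> y \<noteq> 1" using assms by (auto simp: mchar_eq_eps_iff)
  have "(\<Sum>x\<in>UNIV. \<chi> x) = (\<Sum>x\<in>UNIV. \<chi> (y * x))"
    by (rule sum.reindex_bij_witness[of _ "\<lambda>x. y * x" "\<lambda>x. x / y"]) (use y in auto)
  also have "\<dots> = \<chi> y * (\<Sum>x\<in>UNIV. \<chi> x)" by (simp add: mchar_mult[OF assms] sum_distrib_left)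
  finally show ?thesis using y False by (simp add: algebra_simps)
qed

lemma sum_mchars:
  assumes "(x::'a::{field,finite}) \<noteq> 0"
  shows "(\<Sum>\<chi>\<in>mchars. \<chi> x) = (if x = 1 then of_nat CARD('a) - 1 else 0)"
proof (cases "x = 1")
  case True
  thus ?thesis using card_UNIV_field_ge_2[where 'a='a] by (simp add: mchar_one card_mchars of_nat_diff)
next
  case False
  then obtain \<eta> where \<eta>: "\<eta> \<in> mchars" "\<eta> x \<noteq> 1" using mchars_separate_points assms by blast
  have inv: "cmul (cinv \<eta>) (cmul \<eta> \<chi>) = \<chi>" "cmul \<eta> (cmul (cinv \<eta>) \<chi>) = \<chi>"
    if "\<chi> \<in> mchars" for \<chi>
    using that \<eta>(1) cmul_cinv[OF \<eta>(1)] cmul_eps[OF that]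
    by (simp_all add: cmul_assoc[symmetric] cmul_commute[of "cinv \<eta>" \<eta>]) (simp_all add: cmul_commute)
  have "(\<Sum>\<chi>\<in>mchars. \<chi> x) = (\<Sum>\<chi>\<in>mchars. cmul \<eta> \<chi> x)"
    by (rule sum.reindex_bij_witness[of _ "cmul \<eta>" "cmul (cinv \<eta>)"])
       (simp_all add: inv \<eta>(1) cmul_mchar cinv_mchar)
  also have "\<dots> = \<eta> x * (\<Sum>\<chi>\<in>mchars. \<chi> x)" by (simp add: cmul_def sum_distrib_left)
  finally show ?thesis using \<eta> False by (simp add: algebra_simps)
qed

section \<open>Series over the characters of a finite field\<close>

definition char_series :: "(('a::{field,finite} \<Rightarrow> complex) \<Rightarrow> complex) \<Rightarrow> 'a \<Rightarrow> complex" where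
  "char_series f u = (\<Sum>\<chi>\<in>mchars. \<chi> u * f \<chi>)"

lemma char_series_zero: "char_series f 0 = 0"
  by (simp add: char_series_def mchar_zero)

lemma char_series_coeff:
  assumes "\<mu> \<in> mchars"
  shows "(\<Sum>u\<in>UNIV. inverse (\<mu> u) * char_series f u) = (of_nat CARD('a) - 1) * f (\<mu> :: 'a::{field,finite} \<Rightarrow> complex)"
proof -
  have "(\<Sum>u\<in>UNIV. inverse (\<mu> u) * char_series f u) = (\<Sum>\<chi>\<in>mchars. f \<chi> * (\<Sum>u\<in>UNIV. cmul \<chi> (cinv \<mu>) u))"
    unfolding char_series_def
    by (simp add: sum_distrib_left sum_distrib_right sum.swap[of _ mchars] cmul_def cinv_def mult_ac)
  also have "\<dots> = (\<Sum>\<chi>\<in>mchars. if \<chi> = \<mu> then (of_nat CARD('a) - 1) * f \<chi> else 0)"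
    using assms by (intro sum.cong)
      (simp_all add: sum_mchar cmul_mchar cinv_mchar cmul_cinv_eq_eps_iff)
  also have "\<dots> = (of_nat CARD('a) - 1) * f \<mu>"
    using assms by (simp add: sum.delta[OF finite_mchars])
  finally show ?thesis .
qed

text \<open>Recovering \<open>f (\<Prod>\<^sub>j \<nu>\<^sub>j)\<close> from its character series decouples the \<open>\<nu>\<^sub>j\<close>, so the
  multiple sum over \<open>I \<rightarrow>\<^sub>E mchars\<close> factors into one-variable series.\<close>

lemma sum_PiE_mchars_eq_char_series:
  fixes f :: "('a::{field,finite} \<Rightarrow> complex) \<Rightarrow> complex"
    and g :: "nat \<Rightarrow> ('a \<Rightarrow> complex) \<Rightarrow> complex"
  assumes "finite I"
  shows "(of_nat CARD('a) - 1) * (\<Sum>\<nu>\<in>I \<rightarrow>\<^sub>E mchars. f (chprod \<nu> I) * (\<Prod>j\<in>I. g j (\<nu> j) * \<nu> j (lam j)))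
       = (\<Sum>u\<in>UNIV. char_series f u * (\<Prod>j\<in>I. char_series (g j) (lam j / u)))"
proof -
  have pointwise: "char_series f u * (\<Prod>j\<in>I. \<nu> j (lam j / u) * g j (\<nu> j)) =
      inverse (chprod \<nu> I u) * char_series f u * (\<Prod>j\<in>I. g j (\<nu> j) * \<nu> j (lam j))"
    if \<nu>: "\<nu> \<in> I \<rightarrow>\<^sub>E mchars" for \<nu> u
  proof (cases "u = 0")
    case False
    have "(\<Prod>j\<in>I. \<nu> j (lam j / u) * g j (\<nu> j)) = (\<Prod>j\<in>I. g j (\<nu> j) * \<nu> j (lam j) / \<nu> j u)"
      using \<nu> by (intro prod.cong) (auto simp: PiE_iff mchar_divide)
    also have "\<dots> = inverse (chprod \<nu> I u) * (\<Prod>j\<in>I. g j (\<nu> j) * \<nu> j (lam j))"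
      using False by (simp add: prod_dividef chprod_def field_simps)
    finally show ?thesis by simp
  qed (simp add: char_series_zero)
  have "(\<Sum>u\<in>UNIV. char_series f u * (\<Prod>j\<in>I. char_series (g j) (lam j / u)))
      = (\<Sum>u\<in>UNIV. \<Sum>\<nu>\<in>I \<rightarrow>\<^sub>E mchars. char_series f u * (\<Prod>j\<in>I. \<nu> j (lam j / u) * g j (\<nu> j)))"
    unfolding char_series_def[of "g _"]
    by (simp add: prod_sum_PiE[OF assms] finite_mchars sum_distrib_left)
  also have "\<dots> = (\<Sum>\<nu>\<in>I \<rightarrow>\<^sub>E mchars. \<Sum>u\<in>UNIV.
        inverse (chprod \<nu> I u) * char_series f u * (\<Prod>j\<in>I. g j (\<nu> j) * \<nu> j (lam j)))"
    by (subst sum.swap) (intro sum.cong refl, simp only: pointwise)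
  also have "\<dots> = (\<Sum>\<nu>\<in>I \<rightarrow>\<^sub>E mchars. (\<Prod>j\<in>I. g j (\<nu> j) * \<nu> j (lam j)) *
                     (\<Sum>u\<in>UNIV. inverse (chprod \<nu> I u) * char_series f u))"
    by (simp add: sum_distrib_left sum_distrib_right mult_ac)
  also have "\<dots> = (\<Sum>\<nu>\<in>I \<rightarrow>\<^sub>E mchars. (\<Prod>j\<in>I. g j (\<nu> j) * \<nu> j (lam j)) *
                     ((of_nat CARD('a) - 1) * f (chprod \<nu> I)))"
  proof (intro sum.cong refl arg_cong[where f = "(*) _"])
    fix \<nu> :: "nat \<Rightarrow> 'a \<Rightarrow> complex" assume "\<nu> \<in> I \<rightarrow>\<^sub>E mchars"
    hence "chprod \<nu> I \<in> mchars" using assms by (intro chprod_mchar) auto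
    thus "(\<Sum>u\<in>UNIV. inverse (chprod \<nu> I u) * char_series f u) = (of_nat CARD('a) - 1) * f (chprod \<nu> I)"
      by (rule char_series_coeff)
  qed
  finally show ?thesis by (simp add: sum_distrib_left mult_ac)
qed

section \<open>Gauss sums\<close>

locale nontrivial_add_char =
  fixes \<psi> :: "'a::{field,finite} \<Rightarrow> complex"
  assumes add_char: "add_char \<psi>" and nontrivial: "\<exists>x. \<psi> x \<noteq> 1"
begin

lemma psi_zero: "\<psi> 0 = 1"
  and psi_add: "\<psi> (x + y) = \<psi> x * \<psi> y"
  using add_char by (simp_all add: add_char_def)

lemma sum_psi: "(\<Sum>x\<in>UNIV. \<psi> x) = 0"
proof -
  obtain z where z: "\<psi> z \<noteq> 1" using nontrivial by blast
  have "(\<Sum>x\<in>UNIV. \<psi> x) = (\<Sum>x\<in>UNIV. \<psi> (x + z))"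
    by (rule sum.reindex_bij_witness[of _ "\<lambda>x. x + z" "\<lambda>x. x - z"]) auto
  also have "\<dots> = \<psi> z * (\<Sum>x\<in>UNIV. \<psi> x)" by (simp add: psi_add sum_distrib_left mult.commute)
  finally show ?thesis using z by (simp add: algebra_simps)
qed

lemma sum_psi_mult: "(\<Sum>x\<in>UNIV. \<psi> (a * x)) = (if a = 0 then of_nat CARD('a) else 0)"
proof (cases "a = 0")
  case False
  have "(\<Sum>x\<in>UNIV. \<psi> (a * x)) = (\<Sum>x\<in>UNIV. \<psi> x)"
    by (rule sum.reindex_bij_witness[of _ "\<lambda>x. x / a" "\<lambda>x. a * x"]) (use False in auto)
  thus ?thesis using False sum_psi by simp
qed (simp add: psi_zero)

lemma gauss_eq_sum: "\<chi> \<in> mchars \<Longrightarrow> gauss \<psi> \<chi> = - (\<Sum>x\<in>UNIV. \<psi> x * \<chi> x)"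
  by (simp add: gauss_def sum.remove[of UNIV 0] mchar_zero)

lemma sum_psi_mult_mchar:
  assumes "\<chi> \<in> mchars" "v \<noteq> 0"
  shows "(\<Sum>x\<in>UNIV. \<psi> (v * x) * \<chi> x) = - inverse (\<chi> v) * gauss \<psi> \<chi>"
proof -
  have "(\<Sum>x\<in>UNIV. \<psi> (v * x) * \<chi> x) = (\<Sum>y\<in>UNIV. \<psi> y * \<chi> (y / v))"
    by (rule sum.reindex_bij_witness[of _ "\<lambda>y. y / v" "\<lambda>x. v * x"]) (use assms in auto)
  also have "\<dots> = inverse (\<chi> v) * (\<Sum>y\<in>UNIV. \<psi> y * \<chi> y)"
    by (simp add: sum_distrib_left mchar_divide[OF assms(1)] field_simps)
  finally show ?thesis by (simp add: gauss_eq_sum[OF assms(1)])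
qed

lemma gauss_eps: "gauss \<psi> eps = 1"
proof -
  have "(\<Sum>x\<in>UNIV. \<psi> x * eps x) = (\<Sum>x\<in>UNIV. \<psi> x - (if x = 0 then 1 else 0))"
    by (rule sum.cong) (auto simp: eps_def psi_zero)
  thus ?thesis by (simp add: gauss_eq_sum[OF eps_mchar] sum_subtractf sum_psi)
qed

lemma gauss0_eq: "gauss0 \<psi> \<chi> = (if \<chi> = eps then of_nat CARD('a) * gauss \<psi> \<chi> else gauss \<psi> \<chi>)"
  by (simp add: gauss0_def delta_def)

lemma gauss_mult_gauss_cinv:
  assumes "\<chi> \<in> mchars" "\<chi> \<noteq> eps"
  shows "gauss \<psi> \<chi> * gauss \<psi> (cinv \<chi>) = \<chi> (- 1) * of_nat CARD('a)"
proof -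
  have \<chi>': "cinv \<chi> \<in> mchars" "cinv \<chi> \<noteq> eps"
    using assms cinv_mchar cinv_cinv cinv_eps by metis+
  have inner: "\<psi> x * (- \<chi> x * gauss \<psi> (cinv \<chi>)) = (\<Sum>y\<in>UNIV. cinv \<chi> y * (\<psi> x * \<psi> (x * y)))" for x
  proof (cases "x = 0")
    case True
    thus ?thesis using \<chi>' by (simp add: mchar_zero[OF assms(1)] psi_zero sum_mchar)
  next
    case False
    have "(\<Sum>y\<in>UNIV. \<psi> (x * y) * cinv \<chi> y) = - inverse (cinv \<chi> x) * gauss \<psi> (cinv \<chi>)"
      by (rule sum_psi_mult_mchar[OF \<chi>'(1) False])
    hence "\<psi> x * (- \<chi> x * gauss \<psi> (cinv \<chi>)) = \<psi> x * (\<Sum>y\<in>UNIV. \<psi> (x * y) * cinv \<chi> y)"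
      by (simp add: cinv_def)
    thus ?thesis by (simp add: sum_distrib_left mult_ac)
  qed
  have "gauss \<psi> \<chi> * gauss \<psi> (cinv \<chi>) = (\<Sum>x\<in>UNIV. \<psi> x * \<chi> x) * - gauss \<psi> (cinv \<chi>)"
    by (simp add: gauss_eq_sum[OF assms(1)])
  also have "\<dots> = (\<Sum>x\<in>UNIV. \<psi> x * (- \<chi> x * gauss \<psi> (cinv \<chi>)))"
    by (simp add: sum_distrib_right mult.assoc sum_negf)
  also have "\<dots> = (\<Sum>y\<in>UNIV. cinv \<chi> y * (\<Sum>x\<in>UNIV. \<psi> ((1 + y) * x)))"
  proof -
    have psi_mult: "\<psi> x * \<psi> (x * y) = \<psi> ((1 + y) * x)" for x y
    proof -
      have "(1 + y) * x = x + x * y" by (simp add: algebra_simps)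
      thus ?thesis by (simp add: psi_add)
    qed
    show ?thesis
      unfolding inner by (subst sum.swap) (simp only: psi_mult sum_distrib_left)
  qed
  also have "\<dots> = (\<Sum>y\<in>UNIV. if y = - 1 then cinv \<chi> y * of_nat CARD('a) else 0)"
    by (intro sum.cong refl) (simp add: sum_psi_mult add_eq_0_iff)
  also have "\<dots> = cinv \<chi> (- 1) * of_nat CARD('a)"
    by simp
  also have "cinv \<chi> (- 1) = \<chi> (- 1)"
    using assms(1) by (simp add: cinv_def mchar_minus_one_inverse)
  finally show ?thesis .
qed

lemma gauss0_mult_gauss_cinv:
  assumes "\<chi> \<in> mchars"
  shows "gauss0 \<psi> \<chi> * gauss \<psi> (cinv \<chi>) = \<chi> (- 1) * of_nat CARD('a)"
proof (cases "\<chi> = eps")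
  case True
  thus ?thesis by (simp add: gauss0_eq cinv_eps gauss_eps) (simp add: eps_def)
qed (simp add: gauss0_eq gauss_mult_gauss_cinv assms)

lemma gauss0_nonzero: "\<chi> \<in> mchars \<Longrightarrow> gauss0 \<psi> \<chi> \<noteq> 0"
  using gauss0_mult_gauss_cinv mchar_nonzero[of \<chi> "- 1"] by force

lemma gauss_nonzero: "\<chi> \<in> mchars \<Longrightarrow> gauss \<psi> \<chi> \<noteq> 0"
  using gauss0_mult_gauss_cinv[OF cinv_mchar] mchar_nonzero[OF cinv_mchar, of \<chi> "- 1"]
  by (force simp: cinv_cinv)

lemma sum_mchars_gauss_mult_gauss:
  assumes "\<alpha> \<in> mchars" "\<gamma> \<in> mchars" "w \<noteq> 0"
  shows "(\<Sum>\<mu>\<in>mchars. \<mu> w * (gauss \<psi> (cmul \<alpha> \<mu>) * gauss \<psi> (cinv (cmul \<gamma> \<mu>))))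
       = (of_nat CARD('a) - 1) * inverse (\<gamma> w) * (\<Sum>x\<in>UNIV. \<psi> ((1 + w) * x) * cmul \<alpha> (cinv \<gamma>) x)"
proof -
  define c where "c x y = \<psi> x * \<alpha> x * (\<psi> y * inverse (\<gamma> y))" for x y
  have expand: "\<mu> w * (gauss \<psi> (cmul \<alpha> \<mu>) * gauss \<psi> (cinv (cmul \<gamma> \<mu>)))
      = (\<Sum>x\<in>UNIV. \<Sum>y\<in>UNIV. c x y * \<mu> (w * x / y))" if \<mu>: "\<mu> \<in> mchars" for \<mu>
  proof -
    have "gauss \<psi> (cmul \<alpha> \<mu>) * gauss \<psi> (cinv (cmul \<gamma> \<mu>))
        = (\<Sum>x\<in>UNIV. \<Sum>y\<in>UNIV. (\<psi> x * cmul \<alpha> \<mu> x) * (\<psi> y * cinv (cmul \<gamma> \<mu>) y))"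
      using assms \<mu> by (simp add: gauss_eq_sum cmul_mchar cinv_mchar sum_product)
    moreover have "\<mu> w * ((\<psi> x * cmul \<alpha> \<mu> x) * (\<psi> y * cinv (cmul \<gamma> \<mu>) y)) = c x y * \<mu> (w * x / y)" for x y
      using \<mu> by (simp add: c_def cmul_def cinv_def mchar_mult mchar_divide field_simps)
    ultimately show ?thesis by (simp add: sum_distrib_left)
  qed
  have orth: "c x y * (\<Sum>\<mu>\<in>mchars. \<mu> (w * x / y)) = (if y = w * x then (of_nat CARD('a) - 1) * c x y else 0)"
    for x y
  proof (cases "x = 0 \<or> y = 0")
    case True
    thus ?thesis using assms by (auto simp: c_def mchar_zero)
  next
    case False
    hence "w * x / y = 1 \<longleftrightarrow> y = w * x" by (auto simp: field_simps)
    thus ?thesis using False assms(3) by (simp add: sum_mchars)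
  qed
  have diag: "c x (w * x) = inverse (\<gamma> w) * (\<psi> ((1 + w) * x) * cmul \<alpha> (cinv \<gamma>) x)" for x
  proof -
    have "(1 + w) * x = x + w * x" by (simp add: algebra_simps)
    thus ?thesis using assms(2) by (simp add: c_def psi_add cmul_def cinv_def mchar_mult field_simps)
  qed
  have "(\<Sum>\<mu>\<in>mchars. \<mu> w * (gauss \<psi> (cmul \<alpha> \<mu>) * gauss \<psi> (cinv (cmul \<gamma> \<mu>))))
      = (\<Sum>x\<in>UNIV. \<Sum>y\<in>UNIV. c x y * (\<Sum>\<mu>\<in>mchars. \<mu> (w * x / y)))"
    by (simp add: expand sum_distrib_left cong: sum.cong) (subst sum.swap, simp add: sum.swap[of _ mchars])
  also have "\<dots> = (of_nat CARD('a) - 1) * (\<Sum>x\<in>UNIV. c x (w * x))"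
    by (simp only: orth) (simp add: sum_distrib_left)
  finally show ?thesis by (simp only: diag) (simp add: sum_distrib_left mult_ac)
qed

section \<open>An Euler-type integral representation of \<open>F\<^sub>D\<close>\<close>

definition euler_kernel :: "('a \<Rightarrow> complex) \<Rightarrow> ('a \<Rightarrow> complex) \<Rightarrow> 'a \<Rightarrow> complex" where
  "euler_kernel \<alpha> \<gamma> = char_series (\<lambda>\<mu>. poch \<psi> \<alpha> \<mu> / poch0 \<psi> \<gamma> \<mu>)"

lemma poch_div_poch0:
  assumes "\<alpha> \<in> mchars" "\<gamma> \<in> mchars" "\<mu> \<in> mchars"
  shows "poch \<psi> \<alpha> \<mu> / poch0 \<psi> \<gamma> \<mu> = gauss0 \<psi> \<gamma> / (of_nat CARD('a) * gauss \<psi> \<alpha>) *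
           (\<gamma> (- 1) * \<mu> (- 1)) * (gauss \<psi> (cmul \<alpha> \<mu>) * gauss \<psi> (cinv (cmul \<gamma> \<mu>)))"
proof -
  have \<gamma>\<mu>: "cmul \<gamma> \<mu> \<in> mchars" using assms by (simp add: cmul_mchar)
  have refl: "gauss0 \<psi> (cmul \<gamma> \<mu>) * gauss \<psi> (cinv (cmul \<gamma> \<mu>)) = cmul \<gamma> \<mu> (- 1) * of_nat CARD('a)"
    by (rule gauss0_mult_gauss_cinv[OF \<gamma>\<mu>])
  have sq: "cmul \<gamma> \<mu> (- 1) * cmul \<gamma> \<mu> (- 1) = 1"
    by (rule mchar_minus_one_square[OF \<gamma>\<mu>])
  have "gauss \<psi> \<alpha> \<noteq> 0" "gauss0 \<psi> \<gamma> \<noteq> 0" "gauss0 \<psi> (cmul \<gamma> \<mu>) \<noteq> 0" "(of_nat CARD('a) :: complex) \<noteq> 0"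
    using assms \<gamma>\<mu> by (simp_all add: gauss_nonzero gauss0_nonzero)
  with refl sq show ?thesis
    by (simp add: poch_def poch0_def cmul_def field_simps)
qed

lemma euler_kernel_zero: "euler_kernel \<alpha> \<gamma> 0 = 0"
  by (simp add: euler_kernel_def char_series_zero)

lemma euler_kernel_sum:
  assumes "\<alpha> \<in> mchars" "\<gamma> \<in> mchars" "u \<noteq> 0"
  shows "euler_kernel \<alpha> \<gamma> u = (of_nat CARD('a) - 1) * gauss0 \<psi> \<gamma> / (of_nat CARD('a) * gauss \<psi> \<alpha>) *
           inverse (\<gamma> u) * (\<Sum>x\<in>UNIV. \<psi> ((1 - u) * x) * cmul \<alpha> (cinv \<gamma>) x)"
proof -
  define C where "C = gauss0 \<psi> \<gamma> / (of_nat CARD('a) * gauss \<psi> \<alpha>) * \<gamma> (- 1)"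
  have "euler_kernel \<alpha> \<gamma> u
      = C * (\<Sum>\<mu>\<in>mchars. \<mu> (- u) * (gauss \<psi> (cmul \<alpha> \<mu>) * gauss \<psi> (cinv (cmul \<gamma> \<mu>))))"
    unfolding euler_kernel_def char_series_def C_def sum_distrib_left
    using assms by (intro sum.cong refl) (simp add: poch_div_poch0 mchar_minus[of _ u] mult_ac)
  also have "\<dots> = C * ((of_nat CARD('a) - 1) * inverse (\<gamma> (- u)) *
                     (\<Sum>x\<in>UNIV. \<psi> ((1 - u) * x) * cmul \<alpha> (cinv \<gamma>) x))"
    using sum_mchars_gauss_mult_gauss[OF assms(1,2), of "- u"] assms(3) by simp
  also have "\<gamma> (- 1) * inverse (\<gamma> (- u)) = inverse (\<gamma> u)"
    using assms(2) mchar_nonzero[OF assms(2), of "- 1"]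
    by (simp add: mchar_minus[of _ u] field_simps)
  ultimately show ?thesis by (simp add: C_def mult_ac)
qed

lemma euler_kernel_eq:
  assumes "\<alpha> \<in> mchars" "\<gamma> \<in> mchars" "u \<noteq> 0" "u \<noteq> 1"
  shows "euler_kernel \<alpha> \<gamma> u = - (of_nat CARD('a) - 1) * gauss0 \<psi> \<gamma> * gauss \<psi> (cmul \<alpha> (cinv \<gamma>))
           / (of_nat CARD('a) * gauss \<psi> \<alpha>) * (inverse (\<gamma> u) * cmul (cinv \<alpha>) \<gamma> (1 - u))"
proof -
  have "(\<Sum>x\<in>UNIV. \<psi> ((1 - u) * x) * cmul \<alpha> (cinv \<gamma>) x)
      = - inverse (cmul \<alpha> (cinv \<gamma>) (1 - u)) * gauss \<psi> (cmul \<alpha> (cinv \<gamma>))"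
    using assms by (intro sum_psi_mult_mchar) (simp_all add: cmul_mchar cinv_mchar)
  also have "inverse (cmul \<alpha> (cinv \<gamma>) (1 - u)) = cmul (cinv \<alpha>) \<gamma> (1 - u)"
    by (simp add: cmul_def cinv_def)
  finally have "(\<Sum>x\<in>UNIV. \<psi> ((1 - u) * x) * cmul \<alpha> (cinv \<gamma>) x)
      = - cmul (cinv \<alpha>) \<gamma> (1 - u) * gauss \<psi> (cmul \<alpha> (cinv \<gamma>))" .
  moreover have "gauss \<psi> \<alpha> \<noteq> 0" "(of_nat CARD('a) :: complex) \<noteq> 0"
    using assms(1) by (simp_all add: gauss_nonzero)
  ultimately show ?thesis using assms by (simp add: euler_kernel_sum field_simps)
qed

lemma euler_kernel_one:
  assumes "\<alpha> \<in> mchars" "\<gamma> \<in> mchars" "\<alpha> \<noteq> \<gamma>"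
  shows "euler_kernel \<alpha> \<gamma> 1 = 0"
  using assms by (simp add: euler_kernel_sum psi_zero sum_mchar cmul_mchar cinv_mchar cmul_cinv_eq_eps_iff)

text \<open>The finite-field \<open>\<^sub>1F\<^sub>0(\<beta>; v) = (1 - q)\<inverse> \<Sum>\<^sub>\<nu> (\<beta>)\<^sub>\<nu> / (\<epsilon>)\<degree>\<^sub>\<nu> \<nu>(v)\<close>.\<close>

definition F10 :: "('a \<Rightarrow> complex) \<Rightarrow> 'a \<Rightarrow> complex" where
  "F10 \<beta> v = euler_kernel \<beta> eps v / (1 - of_nat CARD('a))"

lemma F10_zero: "F10 \<beta> 0 = 0"
  by (simp add: F10_def euler_kernel_zero)

lemma F10_one: "\<beta> \<in> mchars \<Longrightarrow> \<beta> \<noteq> eps \<Longrightarrow> F10 \<beta> 1 = 0"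
  by (simp add: F10_def euler_kernel_one eps_mchar)

lemma F10_eq:
  assumes "\<beta> \<in> mchars" "v \<noteq> 0" "v \<noteq> 1"
  shows "F10 \<beta> v = inverse (\<beta> (1 - v))"
proof -
  have "gauss \<psi> \<beta> \<noteq> 0" by (rule gauss_nonzero[OF assms(1)])
  hence "euler_kernel \<beta> eps v = (1 - of_nat CARD('a)) * cinv \<beta> (1 - v)"
    using euler_kernel_eq[OF assms(1) eps_mchar assms(2,3)] assms(1)
    by (simp add: gauss0_eq gauss_eps cinv_eps cmul_eps cinv_mchar) (simp add: eps_def assms(2))
  moreover have "(of_nat CARD('a) :: complex) \<noteq> 1"
    using card_UNIV_field_ge_2[where 'a='a] by simp
  ultimately show ?thesis by (simp add: F10_def cinv_def)
qed

lemma F10_inverse_arg: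
  assumes "B \<in> mchars" "u \<noteq> 0" "u \<noteq> 1"
  shows "F10 B (1 / u) = B (- 1) * B u * inverse (B (1 - u))"
proof -
  have "1 - 1 / u = - 1 * (1 - u) / u" using assms(2) by (simp add: field_simps)
  hence "B (1 - 1 / u) = B (- 1) * B (1 - u) / B u"
    by (simp only: mchar_divide[OF assms(1)] mchar_mult[OF assms(1)])
  thus ?thesis
    using assms by (simp add: F10_eq mchar_minus_one_inverse divide_inverse mult_ac)
qed

lemma prod_F10:
  assumes "finite I" "I \<noteq> {}" "\<And>j. j \<in> I \<Longrightarrow> \<beta> j \<in> mchars" "chprod \<beta> I \<noteq> eps"
  shows "(\<Prod>j\<in>I. F10 (\<beta> j) v) = F10 (chprod \<beta> I) v"
proof -
  have B: "chprod \<beta> I \<in> mchars" using assms(1,3) by (rule chprod_mchar)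
  consider "v = 0" | "v = 1" | "v \<noteq> 0" "v \<noteq> 1" by blast
  then show ?thesis
  proof cases
    case 1
    thus ?thesis using assms(1,2) by (simp add: F10_zero card_gt_0_iff)
  next
    case 2
    obtain j where "j \<in> I" "\<beta> j \<noteq> eps" using assms(4) chprod_eps by blast
    hence "\<exists>j\<in>I. F10 (\<beta> j) v = 0" using 2 assms(3) F10_one by blast
    thus ?thesis using 2 assms(1,4) B by (simp add: prod_zero F10_one)
  next
    case 3
    have "(\<Prod>j\<in>I. F10 (\<beta> j) v) = (\<Prod>j\<in>I. inverse (\<beta> j (1 - v)))"
      using 3 assms(3) by (intro prod.cong) (simp_all add: F10_eq)
    also have "\<dots> = inverse (chprod \<beta> I (1 - v))"
      using 3 prod_inversef[of "\<lambda>j. \<beta> j (1 - v)" I] by (simp add: chprod_def o_def)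
    finally show ?thesis using 3 B by (simp add: F10_eq)
  qed
qed

lemma FD_euler_integral:
  assumes "\<alpha> \<in> mchars" "\<gamma> \<in> mchars"
  shows "FD \<psi> m \<alpha> \<beta> \<gamma> lam = (\<Sum>u\<in>UNIV. euler_kernel \<alpha> \<gamma> u * (\<Prod>j<m. F10 (\<beta> j) (lam j / u)))
                               / (of_nat CARD('a) - 1)"
proof -
  define f where "f = (\<lambda>\<mu>. poch \<psi> \<alpha> \<mu> / poch0 \<psi> \<gamma> \<mu>)"
  define g where "g j = (\<lambda>\<chi>. poch \<psi> (\<beta> j) \<chi> / poch0 \<psi> eps \<chi>)" for j
  define S where "S = (\<Sum>\<nu>\<in>{..<m} \<rightarrow>\<^sub>E mchars. f (chprod \<nu> {..<m}) * (\<Prod>j<m. g j (\<nu> j) * \<nu> j (lam j)))"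
  have "(\<Prod>j<m. F10 (\<beta> j) (lam j / u)) = (\<Prod>j<m. char_series (g j) (lam j / u)) / (1 - of_nat CARD('a)) ^ m" for u
    by (simp add: F10_def euler_kernel_def g_def prod_dividef)
  hence "(\<Sum>u\<in>UNIV. euler_kernel \<alpha> \<gamma> u * (\<Prod>j<m. F10 (\<beta> j) (lam j / u)))
      = (of_nat CARD('a) - 1) * S / (1 - of_nat CARD('a)) ^ m"
    using sum_PiE_mchars_eq_char_series[of "{..<m}" f g lam]
    by (simp add: S_def euler_kernel_def f_def sum_divide_distrib)
  moreover have "(of_nat CARD('a) - 1 :: complex) \<noteq> 0"
    using card_UNIV_field_ge_2[where 'a='a] by simp
  moreover have "FD \<psi> m \<alpha> \<beta> \<gamma> lam = S / (1 - of_nat CARD('a)) ^ m"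
  proof (cases "m = 0")
    case True
    have "f eps = 1"
      using assms by (simp add: f_def poch_def poch0_def cmul_eps gauss_nonzero gauss0_nonzero)
    moreover have "chprod \<nu> {} = eps" for \<nu> :: "nat \<Rightarrow> 'a \<Rightarrow> complex"
      by (rule chprod_eps) simp
    ultimately show ?thesis using True by (simp add: FD_def S_def)
  next
    case False
    have "poch \<psi> \<alpha> (chprod \<nu> {..<m}) * (\<Prod>j<m. poch \<psi> (\<beta> j) (\<nu> j))
          / (poch0 \<psi> \<gamma> (chprod \<nu> {..<m}) * (\<Prod>j<m. poch0 \<psi> eps (\<nu> j))) * (\<Prod>j<m. \<nu> j (lam j))
        = f (chprod \<nu> {..<m}) * (\<Prod>j<m. g j (\<nu> j) * \<nu> j (lam j))" for \<nu>
      by (simp add: f_def g_def prod.distrib prod_dividef)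
    thus ?thesis using False by (simp add: FD_def S_def divide_inverse power_inverse mult.commute)
  qed
  ultimately show ?thesis by simp
qed

lemma euler_kernel_mult_F10_away_from_0_1:
  assumes \<alpha>: "\<alpha> \<in> mchars" and \<gamma>: "\<gamma> \<in> mchars" and B: "B \<in> mchars"
    and "B \<noteq> cmul (cinv \<alpha>) \<gamma>" and u: "u \<noteq> 0" "u \<noteq> 1"
  shows "euler_kernel \<alpha> \<gamma> u * F10 B (1 / u) =
    gauss0 \<psi> \<gamma> * gauss \<psi> (cmul (cinv (cmul \<alpha> B)) \<gamma>)
      / (gauss0 \<psi> (cmul (cinv \<alpha>) \<gamma>) * gauss0 \<psi> (cmul (cinv B) \<gamma>)) * euler_kernel \<alpha> (cmul (cinv B) \<gamma>) u"
proof -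
  define \<chi> where "\<chi> = cmul (cinv \<alpha>) \<gamma>"
  define \<gamma>' where "\<gamma>' = cmul (cinv B) \<gamma>"
  define \<rho> where "\<rho> = cmul (cinv (cmul \<alpha> B)) \<gamma>"
  have mem: "\<chi> \<in> mchars" "\<gamma>' \<in> mchars" "\<rho> \<in> mchars"
    using assms by (simp_all add: \<chi>_def \<gamma>'_def \<rho>_def cmul_mchar cinv_mchar)
  have cinv_\<chi>: "cinv \<chi> = cmul \<alpha> (cinv \<gamma>)" and cinv_\<rho>: "cinv \<rho> = cmul \<alpha> (cinv \<gamma>')"
    by (simp_all add: \<chi>_def \<gamma>'_def \<rho>_def cmul_def cinv_def fun_eq_iff mult_ac)
  have "\<alpha> \<noteq> \<gamma>'" using assms by (simp add: \<gamma>'_def eq_cmul_cinv_iff)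
  hence "\<rho> \<noteq> eps"
    using cinv_\<rho> \<alpha> mem(2) cinv_eps cmul_cinv_eq_eps_iff by metis
  have "\<rho> (- 1) = B (- 1) * \<chi> (- 1)"
    using B by (simp add: \<rho>_def \<chi>_def cmul_def cinv_def inverse_mult_distrib mchar_minus_one_inverse mult_ac)
  hence reflection: "gauss \<psi> \<rho> * gauss \<psi> (cinv \<rho>) = B (- 1) * (gauss0 \<psi> \<chi> * gauss \<psi> (cinv \<chi>))"
    using gauss_mult_gauss_cinv[OF mem(3) \<open>\<rho> \<noteq> eps\<close>] gauss0_mult_gauss_cinv[OF mem(1)] by simp
  have "gauss0 \<psi> \<chi> \<noteq> 0" "gauss0 \<psi> \<gamma>' \<noteq> 0"
    using mem by (simp_all add: gauss0_nonzero)
  define C where "C = - (of_nat CARD('a) - 1) / (of_nat CARD('a) * gauss \<psi> \<alpha>)"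
  have K: "euler_kernel \<alpha> \<gamma> u = C * gauss0 \<psi> \<gamma> * gauss \<psi> (cinv \<chi>) * (inverse (\<gamma> u) * \<chi> (1 - u))"
    using u \<alpha> \<gamma> by (simp add: euler_kernel_eq C_def cinv_\<chi>[unfolded \<chi>_def] \<chi>_def mult_ac)
  have K': "euler_kernel \<alpha> \<gamma>' u = C * gauss0 \<psi> \<gamma>' * gauss \<psi> (cinv \<rho>) *
      (B u * inverse (\<gamma> u) * (\<chi> (1 - u) * inverse (B (1 - u))))"
    using u \<alpha> mem(2) by (simp add: euler_kernel_eq C_def cinv_\<rho>)
      (simp add: \<gamma>'_def \<chi>_def cmul_def cinv_def inverse_mult_distrib mult_ac)
  have ratio: "gauss \<psi> \<rho> * gauss \<psi> (cinv \<rho>) / gauss0 \<psi> \<chi> = B (- 1) * gauss \<psi> (cinv \<chi>)"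
    unfolding reflection using \<open>gauss0 \<psi> \<chi> \<noteq> 0\<close> by simp
  have "gauss0 \<psi> \<gamma> * gauss \<psi> \<rho> / (gauss0 \<psi> \<chi> * gauss0 \<psi> \<gamma>') * euler_kernel \<alpha> \<gamma>' u
      = C * gauss0 \<psi> \<gamma> * (gauss \<psi> \<rho> * gauss \<psi> (cinv \<rho>) / gauss0 \<psi> \<chi>) *
        (B u * inverse (\<gamma> u) * (\<chi> (1 - u) * inverse (B (1 - u))))"
    unfolding K' using \<open>gauss0 \<psi> \<gamma>' \<noteq> 0\<close> by (simp add: field_simps)
  also have "\<dots> = euler_kernel \<alpha> \<gamma> u * F10 B (1 / u)"
    unfolding ratio K F10_inverse_arg[OF B u] by (simp add: mult_ac)
  finally show ?thesis by (simp add: \<chi>_def \<gamma>'_def \<rho>_def)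
qed

lemma euler_kernel_mult_F10:
  assumes "\<alpha> \<in> mchars" "\<gamma> \<in> mchars" "B \<in> mchars" "B \<noteq> eps" "B \<noteq> cmul (cinv \<alpha>) \<gamma>"
  shows "euler_kernel \<alpha> \<gamma> u * F10 B (1 / u) =
    gauss0 \<psi> \<gamma> * gauss \<psi> (cmul (cinv (cmul \<alpha> B)) \<gamma>)
      / (gauss0 \<psi> (cmul (cinv \<alpha>) \<gamma>) * gauss0 \<psi> (cmul (cinv B) \<gamma>)) * euler_kernel \<alpha> (cmul (cinv B) \<gamma>) u"
proof -
  consider "u = 0" | "u = 1" | "u \<noteq> 0" "u \<noteq> 1" by blast
  thus ?thesis
  proof cases
    case 2
    have "\<alpha> \<noteq> cmul (cinv B) \<gamma>" using assms by (simp add: eq_cmul_cinv_iff)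
    thus ?thesis using 2 assms by (simp add: F10_one euler_kernel_one cmul_mchar cinv_mchar)
  qed (simp_all add: euler_kernel_zero euler_kernel_mult_F10_away_from_0_1 assms)
qed

lemma FD_euler_integral_const_tail:
  assumes "\<alpha> \<in> mchars" "\<gamma> \<in> mchars" "i < n" "\<And>j. j < n \<Longrightarrow> \<beta> j \<in> mchars"
    and "chprod \<beta> {i..<n} \<noteq> eps"
  shows "FD \<psi> n \<alpha> \<beta> \<gamma> (\<lambda>j. if j < i then lam j else x)
    = (\<Sum>u\<in>UNIV. euler_kernel \<alpha> \<gamma> u * (\<Prod>j<i. F10 (\<beta> j) (lam j / u)) * F10 (chprod \<beta> {i..<n}) (x / u))
        / (of_nat CARD('a) - 1)"
proof -
  have split: "(\<Prod>j<n. h j) = (\<Prod>j<i. h j) * (\<Prod>j\<in>{i..<n}. h j)" for h :: "nat \<Rightarrow> complex"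
    using prod.atLeastLessThan_concat[of 0 i n h] \<open>i < n\<close> by (simp add: atLeast0LessThan)
  have "(\<Prod>j<n. F10 (\<beta> j) ((if j < i then lam j else x) / u))
      = (\<Prod>j<i. F10 (\<beta> j) (lam j / u)) * F10 (chprod \<beta> {i..<n}) (x / u)" for u
  proof -
    have "(\<Prod>j<n. F10 (\<beta> j) ((if j < i then lam j else x) / u))
        = (\<Prod>j<i. F10 (\<beta> j) (lam j / u)) * (\<Prod>j\<in>{i..<n}. F10 (\<beta> j) (x / u))"
      unfolding split by (intro arg_cong2[where f = "(*)"] prod.cong) auto
    also have "(\<Prod>j\<in>{i..<n}. F10 (\<beta> j) (x / u)) = F10 (chprod \<beta> {i..<n}) (x / u)"
      using assms(3-5) by (intro prod_F10) auto
    finally show ?thesis .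
  qed
  thus ?thesis using assms(1,2) by (simp add: FD_euler_integral mult.assoc)
qed

lemma FD_merge_tail:
  assumes "\<alpha> \<in> mchars" "\<gamma> \<in> mchars" "i < n" "\<And>j. j < n \<Longrightarrow> \<beta> j \<in> mchars"
    and "chprod \<beta> {i..<n} \<noteq> eps"
  shows "FD \<psi> n \<alpha> \<beta> \<gamma> (\<lambda>j. if j < i then lam j else x)
       = FD \<psi> (Suc i) \<alpha> (\<beta>(i := chprod \<beta> {i..<n})) \<gamma> (lam(i := x))"
proof -
  have "(\<Prod>j<Suc i. F10 ((\<beta>(i := B)) j) ((lam(i := x)) j / u))
      = (\<Prod>j<i. F10 (\<beta> j) (lam j / u)) * F10 B (x / u)" for B u
  proof -
    have "(\<Prod>j<i. F10 ((\<beta>(i := B)) j) ((lam(i := x)) j / u)) = (\<Prod>j<i. F10 (\<beta> j) (lam j / u))"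
      by (intro prod.cong) auto
    thus ?thesis by simp
  qed
  thus ?thesis using assms by (simp add: FD_euler_integral_const_tail FD_euler_integral mult.assoc)
qed

lemma FD_tail_at_one:
  assumes "\<alpha> \<in> mchars" "\<gamma> \<in> mchars" "i < n" "\<And>j. j < n \<Longrightarrow> \<beta> j \<in> mchars"
    and "chprod \<beta> {i..<n} \<notin> {eps, cmul (cinv \<alpha>) \<gamma>}"
  shows "FD \<psi> n \<alpha> \<beta> \<gamma> (\<lambda>j. if j < i then lam j else 1)
       = gauss0 \<psi> \<gamma> * gauss \<psi> (cmul (cinv (cmul \<alpha> (chprod \<beta> {i..<n}))) \<gamma>)
          / (gauss0 \<psi> (cmul (cinv \<alpha>) \<gamma>) * gauss0 \<psi> (cmul (cinv (chprod \<beta> {i..<n})) \<gamma>))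
          * FD \<psi> i \<alpha> \<beta> (cmul (cinv (chprod \<beta> {i..<n})) \<gamma>) lam"
    (is "_ = ?c * _")
proof -
  define B where "B = chprod \<beta> {i..<n}"
  have B: "B \<in> mchars" unfolding B_def using assms(4) by (intro chprod_mchar) auto
  have "euler_kernel \<alpha> \<gamma> u * P * F10 B (1 / u) = ?c * (euler_kernel \<alpha> (cmul (cinv B) \<gamma>) u * P)" for u P
  proof -
    have "euler_kernel \<alpha> \<gamma> u * P * F10 B (1 / u) = euler_kernel \<alpha> \<gamma> u * F10 B (1 / u) * P"
      by (simp only: mult_ac)
    also have "euler_kernel \<alpha> \<gamma> u * F10 B (1 / u) = ?c * euler_kernel \<alpha> (cmul (cinv B) \<gamma>) u"
      using euler_kernel_mult_F10[OF assms(1,2) B, of u] assms(5) by (simp add: B_def)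
    finally show ?thesis by (simp only: mult.assoc)
  qed
  thus ?thesis
    using assms B
    by (simp add: FD_euler_integral_const_tail FD_euler_integral[where m = i] B_def[symmetric]
        cmul_mchar cinv_mchar sum_distrib_left)
qed

lemma FD_one_eq_F21: "FD \<psi> 1 \<alpha> \<beta> \<gamma> lam = F21 \<psi> \<alpha> (\<beta> 0) \<gamma> (lam 0)"
proof -
  have "(\<Sum>\<nu>\<in>{..<1} \<rightarrow>\<^sub>E mchars. poch \<psi> \<alpha> (chprod \<nu> {..<1}) * (\<Prod>j<1. poch \<psi> (\<beta> j) (\<nu> j))
          / (poch0 \<psi> \<gamma> (chprod \<nu> {..<1}) * (\<Prod>j<1. poch0 \<psi> eps (\<nu> j))) * (\<Prod>j<1. \<nu> j (lam j)))
      = (\<Sum>\<chi>\<in>mchars. poch \<psi> \<alpha> \<chi> * poch \<psi> (\<beta> 0) \<chi> / (poch0 \<psi> eps \<chi> * poch0 \<psi> \<gamma> \<chi>) * \<chi> (lam 0))"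
    by (rule sum.reindex_bij_witness[of _ "\<lambda>\<chi>. restrict (\<lambda>_. \<chi>) {..<1}" "\<lambda>\<nu>. \<nu> 0"])
       (auto simp: fun_eq_iff PiE_iff extensional_def chprod_singleton lessThan_Suc mult_ac)
  thus ?thesis by (simp add: FD_def F21_def)
qed

lemma FD_const_eq_F21:
  assumes "\<alpha> \<in> mchars" "\<gamma> \<in> mchars" "0 < n" "\<And>j. j < n \<Longrightarrow> \<beta> j \<in> mchars"
    and "chprod \<beta> {..<n} \<noteq> eps"
  shows "FD \<psi> n \<alpha> \<beta> \<gamma> (\<lambda>_. x) = F21 \<psi> \<alpha> (chprod \<beta> {..<n}) \<gamma> x"
  using FD_merge_tail[of \<alpha> \<gamma> 0 n \<beta> "\<lambda>_. x" x] assms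
  by (simp add: atLeast0LessThan FD_one_eq_F21[unfolded One_nat_def])

lemma FD_at_one:
  assumes "\<alpha> \<in> mchars" "\<gamma> \<in> mchars" "0 < n" "\<And>j. j < n \<Longrightarrow> \<beta> j \<in> mchars"
    and "chprod \<beta> {..<n} \<notin> {eps, cmul (cinv \<alpha>) \<gamma>}"
  shows "FD \<psi> n \<alpha> \<beta> \<gamma> (\<lambda>_. 1)
       = gauss0 \<psi> \<gamma> * gauss \<psi> (cmul (cinv (cmul \<alpha> (chprod \<beta> {..<n}))) \<gamma>)
          / (gauss0 \<psi> (cmul (cinv \<alpha>) \<gamma>) * gauss0 \<psi> (cmul (cinv (chprod \<beta> {..<n})) \<gamma>))"
  using FD_tail_at_one[of \<alpha> \<gamma> 0 n \<beta> "\<lambda>_. 1"] assms by (simp add: atLeast0LessThan FD_def)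

end

theorem theorem3p23:
  fixes \<psi> :: "'a::{field,finite} \<Rightarrow> complex"
    and \<alpha> \<gamma> :: "'a \<Rightarrow> complex" and \<beta> :: "nat \<Rightarrow> 'a \<Rightarrow> complex"
    and n i :: nat
  assumes "add_char \<psi>" and "\<exists>x. \<psi> x \<noteq> 1"
    and "n \<ge> 1" and "i < n"
    and "\<alpha> \<in> mchars" and "\<gamma> \<in> mchars" and "\<forall>j<n. \<beta> j \<in> mchars"
  shows
   "(chprod \<beta> {i..<n} \<noteq> eps \<longrightarrow>
      (\<forall>lam x. FD \<psi> n \<alpha> \<beta> \<gamma> (\<lambda>j. if j < i then lam j else x)
               = FD \<psi> (Suc i) \<alpha> (\<beta>(i := chprod \<beta> {i..<n})) \<gamma> (lam(i := x))))
  \<and> (chprod \<beta> {..<n} \<noteq> eps \<longrightarrow>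
      (\<forall>x. FD \<psi> n \<alpha> \<beta> \<gamma> (\<lambda>_. x) = F21 \<psi> \<alpha> (chprod \<beta> {..<n}) \<gamma> x))
  \<and> (chprod \<beta> {i..<n} \<notin> {eps, cmul (cinv \<alpha>) \<gamma>} \<longrightarrow>
      (\<forall>lam. FD \<psi> n \<alpha> \<beta> \<gamma> (\<lambda>j. if j < i then lam j else 1)
        = gauss0 \<psi> \<gamma> * gauss \<psi> (cmul (cinv (cmul \<alpha> (chprod \<beta> {i..<n}))) \<gamma>)
          / (gauss0 \<psi> (cmul (cinv \<alpha>) \<gamma>) * gauss0 \<psi> (cmul (cinv (chprod \<beta> {i..<n})) \<gamma>))
          * FD \<psi> i \<alpha> \<beta> (cmul (cinv (chprod \<beta> {i..<n})) \<gamma>) lam))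
  \<and> (chprod \<beta> {..<n} \<notin> {eps, cmul (cinv \<alpha>) \<gamma>} \<longrightarrow>
      FD \<psi> n \<alpha> \<beta> \<gamma> (\<lambda>_. 1)
        = gauss0 \<psi> \<gamma> * gauss \<psi> (cmul (cinv (cmul \<alpha> (chprod \<beta> {..<n}))) \<gamma>)
          / (gauss0 \<psi> (cmul (cinv \<alpha>) \<gamma>) * gauss0 \<psi> (cmul (cinv (chprod \<beta> {..<n})) \<gamma>)))"
proof -
  interpret nontrivial_add_char \<psi> using assms(1,2) by unfold_locales
  have "\<And>j. j < n \<Longrightarrow> \<beta> j \<in> mchars" and "0 < n" using assms(3,7) by auto
  thus ?thesis
    using assms(4-6) by (intro conjI impI allI FD_merge_tail FD_const_eq_F21 FD_tail_at_one FD_at_one) auto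
qed

end
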